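(* Let $p,q$ be positive integers, $e\in\mathbb{R}^p$ the vector of all ones, and let $(z,w)\in\mathbb{R}^p\times\mathbb{R}^q$ satisfy $z^+\not\ge\|w\|e$ and $\langle z^-,e\rangle<\|w\|$. If $\langle e,|z|\rangle<\|w\|$, then for every $\lambda_0>0$ the sequence given by $$\lambda_{k+1}=\frac{1}{\|w\|}\left\langle e,[(\lambda_k+1)z-\|w\|e]^-\right\rangle,\qquad k=0,1,\ldots,$$ converges to the unique solution of the equation $\lambda\|w\|=\langle e,[(\lambda+1)z-\|w\|e]^-\rangle$.
   Context: For $\alpha\in\mathbb{R}$, $\alpha^+:=\max(\alpha,0)$ and $\alpha^-:=\max(-\alpha,0)$; for vectors, $z^+$, $z^-$ and $|z|$ are taken componentwise. The order $\ge$ is componentwise; $z^+\not\ge\|w\|e$ means that $z^+\ge\|w\|e$ fails. *)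

theory Defs
  imports "HOL-Analysis.Analysis"
begin

definition vpos :: "real ^ 'n \<Rightarrow> real ^ 'n" where
  "vpos x = (\<chi> i. max (x $ i) 0)"

definition vneg :: "real ^ 'n \<Rightarrow> real ^ 'n" where
  "vneg x = (\<chi> i. max (- (x $ i)) 0)"

definition vabs :: "real ^ 'n \<Rightarrow> real ^ 'n" where
  "vabs x = (\<chi> i. \<bar>x $ i\<bar>)"

definition ones :: "real ^ 'n" where
  "ones = (\<chi> i. 1)"

end

theory Submission
  imports Defs
begin

text \<open>The iteration is \<open>\<lambda>\<^sub>k\<^sub>+\<^sub>1 = f \<lambda>\<^sub>k\<close> with
  \<open>f \<lambda> = \<langle>e, [(\<lambda>+1) z - \<parallel>w\<parallel> e]\<^sup>-\<rangle> / \<parallel>w\<parallel>\<close>. Since \<open>t \<mapsto> t\<^sup>-\<close> is 1-Lipschitz,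
  \<open>f\<close> is Lipschitz with constant \<open>\<langle>e, |z|\<rangle> / \<parallel>w\<parallel> < 1\<close>, so by Banach's fixed point
  theorem it has a unique fixed point, to which every orbit converges geometrically.\<close>

lemma contraction_iterates_tendsto_fixpoint:
  fixes f :: "'a::metric_space \<Rightarrow> 'a"
  assumes c: "0 \<le> c" "c < 1"
    and contr: "\<And>x y. dist (f x) (f y) \<le> c * dist x y"
    and fixpoint: "f a = a"
    and orbit: "\<And>k. x (Suc k) = f (x k)"
  shows "x \<longlonglongrightarrow> a"
proof -
  have dist_bound: "dist (x k) a \<le> c ^ k * dist (x 0) a" for k
  proof (induction k)
    case (Suc k)
    have "dist (x (Suc k)) a = dist (f (x k)) (f a)" by (simp add: orbit fixpoint)
    also have "\<dots> \<le> c * dist (x k) a" by (rule contr)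
    also have "\<dots> \<le> c * (c ^ k * dist (x 0) a)" using Suc c(1) by (rule mult_left_mono)
    finally show ?case by simp
  qed simp
  have "(\<lambda>k. c ^ k * dist (x 0) a) \<longlonglongrightarrow> 0"
    using c by (intro tendsto_mult_left_zero LIMSEQ_power_zero) auto
  then have "(\<lambda>k. dist (x k) a) \<longlonglongrightarrow> 0"
    by (rule Lim_null_comparison[rotated]) (simp add: dist_bound)
  then show ?thesis by (rule tendsto_dist_iff[THEN iffD2])
qed

lemma vabs_scaleR: "vabs (r *\<^sub>R x) = \<bar>r\<bar> *\<^sub>R vabs x"
  by (simp add: vabs_def vec_eq_iff abs_mult)

lemma inner_ones_vabs_nonneg: "0 \<le> ones \<bullet> vabs x"
  by (simp add: inner_vec_def ones_def vabs_def sum_nonneg)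

lemma inner_ones_vneg_lipschitz:
  fixes x y :: "real ^ 'n"
  shows "\<bar>ones \<bullet> vneg x - ones \<bullet> vneg y\<bar> \<le> ones \<bullet> vabs (x - y)"
proof -
  have neg_part_lipschitz: "\<bar>max (- s) 0 - max (- t) 0\<bar> \<le> \<bar>s - t\<bar>" for s t :: real
    by (auto simp: max_def)
  have "\<bar>ones \<bullet> vneg x - ones \<bullet> vneg y\<bar>
      = \<bar>\<Sum>i\<in>UNIV. max (- x $ i) 0 - max (- y $ i) 0\<bar>"
    by (simp add: inner_vec_def ones_def vneg_def sum_subtractf)
  also have "\<dots> \<le> (\<Sum>i\<in>UNIV. \<bar>max (- x $ i) 0 - max (- y $ i) 0\<bar>)"
    by (rule sum_abs)
  also have "\<dots> \<le> (\<Sum>i\<in>UNIV. \<bar>x $ i - y $ i\<bar>)"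
    by (intro sum_mono neg_part_lipschitz)
  also have "\<dots> = ones \<bullet> vabs (x - y)"
    by (simp add: inner_vec_def ones_def vabs_def)
  finally show ?thesis .
qed

lemma iteration_map_lipschitz:
  fixes z :: "real ^ 'p"
  assumes "n > 0"
  defines "f \<equiv> \<lambda>l. ones \<bullet> vneg ((l + 1) *\<^sub>R z - n *\<^sub>R ones) / n"
  shows "dist (f a) (f b) \<le> (ones \<bullet> vabs z / n) * dist a b"
proof -
  have "((a + 1) *\<^sub>R z - n *\<^sub>R ones) - ((b + 1) *\<^sub>R z - n *\<^sub>R ones) = (a - b) *\<^sub>R z"
    by (simp add: algebra_simps)
  then have "\<bar>ones \<bullet> vneg ((a + 1) *\<^sub>R z - n *\<^sub>R ones) - ones \<bullet> vneg ((b + 1) *\<^sub>R z - n *\<^sub>R ones)\<bar>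
      \<le> ones \<bullet> vabs z * \<bar>a - b\<bar>"
    using inner_ones_vneg_lipschitz by (metis vabs_scaleR inner_scaleR_right mult.commute)
  with assms(1) show ?thesis
    by (simp add: f_def dist_real_def diff_divide_distrib[symmetric] divide_right_mono)
qed

theorem proposition5:
  fixes z :: "real ^ 'p" and w :: "real ^ 'q"
  assumes h1: "\<not> (vpos z \<ge> norm w *\<^sub>R ones)"
    and h2: "vneg z \<bullet> ones < norm w"
    and h3: "ones \<bullet> vabs z < norm w"
  shows "(\<exists>!l::real. l * norm w = ones \<bullet> vneg ((l + 1) *\<^sub>R z - norm w *\<^sub>R ones))
    \<and> (\<forall>(lam :: nat \<Rightarrow> real). lam 0 > 0 \<and>
         (\<forall>k. lam (Suc k) = (1 / norm w) * (ones \<bullet> vneg ((lam k + 1) *\<^sub>R z - norm w *\<^sub>R ones)))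
       \<longrightarrow> lam \<longlonglongrightarrow>
           (THE l::real. l * norm w = ones \<bullet> vneg ((l + 1) *\<^sub>R z - norm w *\<^sub>R ones)))"
proof -
  define n where "n = norm w"
  define f where "f l = ones \<bullet> vneg ((l + 1) *\<^sub>R z - n *\<^sub>R ones) / n" for l
  define c where "c = ones \<bullet> vabs z / n"
  have n: "n > 0" using h3 inner_ones_vabs_nonneg[of z] unfolding n_def by linarith
  have c: "0 \<le> c" "c < 1"
    using n h3 inner_ones_vabs_nonneg[of z] by (auto simp: c_def n_def)
  have contr: "dist (f a) (f b) \<le> c * dist a b" for a b
    using iteration_map_lipschitz[OF n] unfolding f_def c_def .
  have fixed_iff: "l * n = ones \<bullet> vneg ((l + 1) *\<^sub>R z - n *\<^sub>R ones) \<longleftrightarrow> f l = l" for l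
    using n by (auto simp: f_def field_simps)
  have unique: "\<exists>!l. f l = l"
    using banach_fix_type[OF c] contr by blast
  then have fixpoint: "f (THE l. f l = l) = (THE l. f l = l)" by (rule theI')
  show ?thesis
    unfolding n_def[symmetric] fixed_iff
  proof (intro conjI unique allI impI)
    fix lam :: "nat \<Rightarrow> real"
    assume "0 < lam 0 \<and> (\<forall>k. lam (Suc k) = (1 / n) * (ones \<bullet> vneg ((lam k + 1) *\<^sub>R z - n *\<^sub>R ones)))"
    then have "lam (Suc k) = f (lam k)" for k by (simp add: f_def)
    then show "lam \<longlonglongrightarrow> (THE l. f l = l)"
      by (rule contraction_iterates_tendsto_fixpoint[OF c contr fixpoint])
  qed
qed

end
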